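(* Let ${\bf D}$ be an $L\times N$ complex matrix with $L=Rd$, $N=Md$, partitioned into consecutive column-blocks ${\bf D}[1],\dots,{\bf D}[M]$ of size $L\times d$ with ${\bf D}^H[\ell]{\bf D}[\ell]={\bf I}_d$ for all $\ell$, and assume ${\bf D}{\bf g}\neq{\bf 0}$ for every nonzero block $2k$-sparse ${\bf g}\in\mathbb{C}^N$. Let ${\bf x}_0\in\mathbb{C}^N$ be block $k$-sparse, ${\bf y}={\bf D}{\bf x}_0$, and let $\mu_{\mathrm B}>0$ be the block-coherence of ${\bf D}$. If $kd<\frac12(\mu_{\mathrm B}^{-1}+d)$, then, running BMP on ${\bf y}$: (1) BMP picks a correct block (a block ${\bf D}[\ell]$ with $\|{\bf x}_0[\ell]\|_2>0$) in each step; (2) the residuals satisfy $\|{\bf r}_\ell\|_2^2\le\beta^\ell\|{\bf r}_0\|_2^2$ for all $\ell\ge0$, where $\beta=1-\frac{1-(k-1)d\mu_{\mathrm B}}{k}$.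
   Context: Vectors in $\mathbb{C}^N$ are viewed as concatenations of consecutive length-$d$ blocks ${\bf x}[1],\dots,{\bf x}[M]$; block $k$-sparse means at most $k$ blocks have nonzero Euclidean norm. $\rho(\cdot)$ is the spectral norm. Block-coherence: $\mu_{\mathrm B}=\max_{\ell,r\neq\ell}\frac1d\rho({\bf D}^H[\ell]{\bf D}[r])$. BMP (block matching pursuit): initialize ${\bf r}_0={\bf y}$; at stage $\ell\ge1$ choose $i_\ell=\arg\max_i\|{\bf D}^H[i]{\bf r}_{\ell-1}\|_2$ and update ${\bf r}_\ell={\bf r}_{\ell-1}-{\bf D}[i_\ell]{\bf D}^H[i_\ell]{\bf r}_{\ell-1}$. *)

theory Defs
  imports Complex_Main
begin

(* Vectors in C^n are functions nat => complex, only indices < n matter.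
   Matrices (L x N) are functions nat => nat => complex, D a j = entry in row a, column j.
   Blocks are indexed 0..M-1; block l of x consists of entries l*d .. l*d+d-1. *)

definition vnorm :: "nat \<Rightarrow> (nat \<Rightarrow> complex) \<Rightarrow> real" where
  "vnorm n v = sqrt (\<Sum>t<n. (cmod (v t))\<^sup>2)"

definition blk :: "nat \<Rightarrow> (nat \<Rightarrow> complex) \<Rightarrow> nat \<Rightarrow> (nat \<Rightarrow> complex)" where
  "blk d x l = (\<lambda>t. x (l * d + t))"

definition block_sparse :: "nat \<Rightarrow> nat \<Rightarrow> nat \<Rightarrow> (nat \<Rightarrow> complex) \<Rightarrow> bool" where
  "block_sparse d M k x \<longleftrightarrow> card {l. l < M \<and> vnorm d (blk d x l) \<noteq> 0} \<le> k"

definition matvec :: "nat \<Rightarrow> (nat \<Rightarrow> nat \<Rightarrow> complex) \<Rightarrow> (nat \<Rightarrow> complex) \<Rightarrow> (nat \<Rightarrow> complex)" where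
  "matvec N D g = (\<lambda>a. \<Sum>j<N. D a j * g j)"

definition blk_apply :: "nat \<Rightarrow> (nat \<Rightarrow> nat \<Rightarrow> complex) \<Rightarrow> nat \<Rightarrow> (nat \<Rightarrow> complex) \<Rightarrow> (nat \<Rightarrow> complex)" where
  "blk_apply d D l z = (\<lambda>a. \<Sum>t<d. D a (l * d + t) * z t)"

definition blk_adj_apply :: "nat \<Rightarrow> nat \<Rightarrow> (nat \<Rightarrow> nat \<Rightarrow> complex) \<Rightarrow> nat \<Rightarrow> (nat \<Rightarrow> complex) \<Rightarrow> (nat \<Rightarrow> complex)" where
  "blk_adj_apply L d D l r = (\<lambda>t. \<Sum>a<L. cnj (D a (l * d + t)) * r a)"

definition blk_gram :: "nat \<Rightarrow> nat \<Rightarrow> (nat \<Rightarrow> nat \<Rightarrow> complex) \<Rightarrow> nat \<Rightarrow> nat \<Rightarrow> (nat \<Rightarrow> nat \<Rightarrow> complex)" where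
  "blk_gram L d D l r = (\<lambda>s t. \<Sum>a<L. cnj (D a (l * d + s)) * D a (r * d + t))"

definition spec_norm :: "nat \<Rightarrow> (nat \<Rightarrow> nat \<Rightarrow> complex) \<Rightarrow> real" where
  "spec_norm n G = Sup {vnorm n (\<lambda>s. \<Sum>t<n. G s t * v t) | v. vnorm n v \<le> 1}"

definition block_coherence :: "nat \<Rightarrow> nat \<Rightarrow> nat \<Rightarrow> (nat \<Rightarrow> nat \<Rightarrow> complex) \<Rightarrow> real" where
  "block_coherence L d M D =
     Max {spec_norm d (blk_gram L d D l r) / real d | l r. l < M \<and> r < M \<and> r \<noteq> l}"

(* BMP residuals for a given sequence of chosen block indices i 1, i 2, ... (i 0 unused):
   r_0 = y,  r_l = r_{l-1} - D[i_l] D^H[i_l] r_{l-1} *)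
fun bmp_res :: "nat \<Rightarrow> nat \<Rightarrow> (nat \<Rightarrow> nat \<Rightarrow> complex) \<Rightarrow> (nat \<Rightarrow> complex) \<Rightarrow> (nat \<Rightarrow> nat) \<Rightarrow> nat \<Rightarrow> (nat \<Rightarrow> complex)" where
  "bmp_res L d D y i 0 = y"
| "bmp_res L d D y i (Suc n) =
     (\<lambda>a. bmp_res L d D y i n a
          - blk_apply d D (i (Suc n)) (blk_adj_apply L d D (i (Suc n)) (bmp_res L d D y i n)) a)"

definition bmp_choice :: "nat \<Rightarrow> nat \<Rightarrow> nat \<Rightarrow> (nat \<Rightarrow> nat \<Rightarrow> complex) \<Rightarrow> (nat \<Rightarrow> complex) \<Rightarrow> (nat \<Rightarrow> nat) \<Rightarrow> bool" where
  "bmp_choice L d M D y i \<longleftrightarrow>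
     (\<forall>l\<ge>1. i l < M \<and>
        (\<forall>j<M. vnorm d (blk_adj_apply L d D j (bmp_res L d D y i (l - 1)))
               \<le> vnorm d (blk_adj_apply L d D (i l) (bmp_res L d D y i (l - 1)))))"

end

theory Submission
  imports Defs "HOL-Analysis.L2_Norm" "HOL-Analysis.Convex"
begin

(*
  Throughout, the residual stays in the span of the blocks of the support S of x0,
  say r = sum_{j in S} D[j] c_j. Orthonormality of each block gives D^H[j] r = c_j plus a
  cross term of norm at most d mu times the sum of the other |c_i|. With m = max |c_j|,
  a block in S correlates with r at least (1 - (k-1) d mu) m and a block outside S at
  most k d mu m; kd < (1/mu + d)/2 makes the first bound win, so BMP picks a block of S
  and subtracts a vector in the same span, which preserves the invariant.
  For the decay, expand |r|^2 = sum_j <c_j, D^H[j] r> in two ways. With A the largest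
  correlation this yields |r|^2 <= A sum_j |c_j| and |r|^2 >= (1 - (k-1) d mu) sum_j |c_j|^2;
  together with (sum_j |c_j|)^2 <= k sum_j |c_j|^2 we get A^2 >= (1 - beta) |r|^2, and each
  BMP step removes exactly A^2 from |r|^2.
*)

definition cinner :: "nat \<Rightarrow> (nat \<Rightarrow> complex) \<Rightarrow> (nat \<Rightarrow> complex) \<Rightarrow> complex" where
  "cinner n u v = (\<Sum>a<n. cnj (u a) * v a)"

lemma vnorm_eq_L2_set: "vnorm n v = L2_set (\<lambda>t. cmod (v t)) {..<n}"
  by (simp add: vnorm_def L2_set_def)

lemma vnorm_cong: "(\<And>t. t < n \<Longrightarrow> u t = w t) \<Longrightarrow> vnorm n u = vnorm n w"
  unfolding vnorm_def by (intro arg_cong[where f=sqrt] sum.cong) auto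

lemma vnorm_nonneg [simp]: "0 \<le> vnorm n v"
  by (simp add: vnorm_eq_L2_set)

lemma vnorm_power2: "(vnorm n v)\<^sup>2 = (\<Sum>t<n. (cmod (v t))\<^sup>2)"
  unfolding vnorm_def by (simp add: sum_nonneg)

lemma vnorm_zero [simp]: "vnorm n (\<lambda>t. 0) = 0"
  by (simp add: vnorm_def)

lemma vnorm_eq_0D: "vnorm n v = 0 \<Longrightarrow> t < n \<Longrightarrow> v t = 0"
  unfolding vnorm_eq_L2_set by (simp add: L2_set_eq_0_iff)

lemma norm_le_vnorm: "t < n \<Longrightarrow> cmod (v t) \<le> vnorm n v"
  unfolding vnorm_eq_L2_set by (rule member_le_L2_set) auto

lemma vnorm_scale: "vnorm n (\<lambda>t. c * v t) = cmod c * vnorm n v"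
  unfolding vnorm_eq_L2_set by (simp add: norm_mult L2_set_right_distrib)

lemma vnorm_diff_le: "vnorm n (\<lambda>t. u t - w t) \<le> vnorm n u + vnorm n w"
proof -
  have "vnorm n (\<lambda>t. u t - w t) \<le> L2_set (\<lambda>t. cmod (u t) + cmod (w t)) {..<n}"
    unfolding vnorm_eq_L2_set by (rule L2_set_mono) (auto simp: norm_triangle_ineq4)
  also have "\<dots> \<le> vnorm n u + vnorm n w"
    unfolding vnorm_eq_L2_set by (rule L2_set_triangle_ineq)
  finally show ?thesis .
qed

lemma vnorm_sum_le: "vnorm n (\<lambda>t. \<Sum>j\<in>A. f j t) \<le> (\<Sum>j\<in>A. vnorm n (f j))"
proof (induction A rule: infinite_finite_induct)
  case (insert x F)
  have "vnorm n (\<lambda>t. f x t + (\<Sum>j\<in>F. f j t))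
        \<le> L2_set (\<lambda>t. cmod (f x t) + cmod (\<Sum>j\<in>F. f j t)) {..<n}"
    unfolding vnorm_eq_L2_set by (rule L2_set_mono) (auto simp: norm_triangle_ineq)
  also have "\<dots> \<le> vnorm n (f x) + vnorm n (\<lambda>t. \<Sum>j\<in>F. f j t)"
    unfolding vnorm_eq_L2_set by (rule L2_set_triangle_ineq)
  finally show ?case using insert by simp
qed simp_all

lemma cinner_self: "cinner n v v = complex_of_real ((vnorm n v)\<^sup>2)"
  unfolding cinner_def vnorm_power2 of_real_sum of_real_power
  by (rule sum.cong) (simp_all, metis complex_norm_square mult.commute of_real_power)

lemma cinner_Cauchy_Schwarz: "cmod (cinner n u v) \<le> vnorm n u * vnorm n v"
proof -
  have "cmod (cinner n u v) \<le> (\<Sum>a<n. cmod (cnj (u a) * v a))"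
    unfolding cinner_def by (rule norm_sum)
  also have "\<dots> = (\<Sum>a<n. \<bar>cmod (u a)\<bar> * \<bar>cmod (v a)\<bar>)" by (simp add: norm_mult)
  also have "\<dots> \<le> vnorm n u * vnorm n v" unfolding vnorm_eq_L2_set by (rule L2_set_mult_ineq)
  finally show ?thesis .
qed

lemma cinner_cong:
  "(\<And>t. t < n \<Longrightarrow> u t = u' t) \<Longrightarrow> (\<And>t. t < n \<Longrightarrow> w t = w' t) \<Longrightarrow> cinner n u w = cinner n u' w'"
  unfolding cinner_def by (rule sum.cong) auto

lemma cnj_cinner: "cnj (cinner n u w) = cinner n w u"
  unfolding cinner_def by (simp add: mult.commute)

lemma cinner_sum_left: "cinner n (\<lambda>a. \<Sum>j\<in>S. f j a) w = (\<Sum>j\<in>S. cinner n (f j) w)"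
  unfolding cinner_def by (simp add: sum_distrib_right sum.swap[where A=S])

lemma cinner_add_right: "cinner n u (\<lambda>t. v t + w t) = cinner n u v + cinner n u w"
  unfolding cinner_def by (simp add: distrib_left sum.distrib)

lemma cinner_diff_left: "cinner n (\<lambda>t. v t - w t) u = cinner n v u - cinner n w u"
  unfolding cinner_def by (simp add: left_diff_distrib sum_subtractf)

lemma cinner_diff_right: "cinner n u (\<lambda>t. v t - w t) = cinner n u v - cinner n u w"
  unfolding cinner_def by (simp add: right_diff_distrib sum_subtractf)

definition mat_apply :: "nat \<Rightarrow> (nat \<Rightarrow> nat \<Rightarrow> complex) \<Rightarrow> (nat \<Rightarrow> complex) \<Rightarrow> (nat \<Rightarrow> complex)" where
  "mat_apply n G v = (\<lambda>s. \<Sum>t<n. G s t * v t)"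

lemma vnorm_mat_apply_le_sum_norm:
  assumes "vnorm n w \<le> 1"
  shows "vnorm n (mat_apply n G w) \<le> (\<Sum>s<n. \<Sum>t<n. cmod (G s t))"
proof -
  have "vnorm n (mat_apply n G w) \<le> (\<Sum>s<n. cmod (mat_apply n G w s))"
    unfolding vnorm_eq_L2_set by (rule L2_set_le_sum) auto
  also have "\<dots> \<le> (\<Sum>s<n. \<Sum>t<n. cmod (G s t * w t))"
    unfolding mat_apply_def by (intro sum_mono norm_sum)
  also have "\<dots> \<le> (\<Sum>s<n. \<Sum>t<n. cmod (G s t))"
    using norm_le_vnorm[of _ n w] assms
    by (intro sum_mono) (auto simp: norm_mult intro!: mult_left_le order_trans[OF norm_le_vnorm])
  finally show ?thesis .
qed

lemma vnorm_mat_apply_le_spec_norm: "vnorm n (mat_apply n G v) \<le> spec_norm n G * vnorm n v"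
proof -
  define X where "X = {vnorm n (\<lambda>s. \<Sum>t<n. G s t * v t) | v. vnorm n v \<le> 1}"
  have bdd: "bdd_above X"
    unfolding X_def bdd_above_def
    by (rule exI[of _ "\<Sum>s<n. \<Sum>t<n. cmod (G s t)"])
       (auto intro: vnorm_mat_apply_le_sum_norm[unfolded mat_apply_def])
  show ?thesis
  proof (cases "vnorm n v = 0")
    case True
    then have "vnorm n (mat_apply n G v) = vnorm n (\<lambda>s. 0)"
      by (intro vnorm_cong) (simp add: mat_apply_def vnorm_eq_0D)
    then show ?thesis using True by simp
  next
    case False
    define c where "c = vnorm n v"
    have cpos: "c > 0" using False c_def vnorm_nonneg[of n v] by linarith
    define w where "w = (\<lambda>t. complex_of_real (1 / c) * v t)"
    have "vnorm n w = 1" unfolding w_def vnorm_scale using cpos c_def by (simp add: norm_divide)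
    then have "vnorm n (mat_apply n G w) \<in> X" unfolding X_def mat_apply_def by auto
    then have le: "vnorm n (mat_apply n G w) \<le> spec_norm n G"
      unfolding spec_norm_def X_def[symmetric] by (rule cSup_upper[OF _ bdd])
    have "mat_apply n G w = (\<lambda>s. complex_of_real (1 / c) * mat_apply n G v s)"
      unfolding mat_apply_def w_def by (rule ext) (simp add: sum_distrib_left mult_ac)
    then have "vnorm n (mat_apply n G w) = vnorm n (mat_apply n G v) / c"
      using cpos vnorm_scale[of n "complex_of_real (1 / c)" "mat_apply n G v"]
      by (simp add: norm_divide)
    with le cpos c_def show ?thesis by (simp add: divide_le_eq mult.commute)
  qed
qed

definition blk_comb :: "nat \<Rightarrow> (nat \<Rightarrow> nat \<Rightarrow> complex) \<Rightarrow> nat set \<Rightarrow> (nat \<Rightarrow> nat \<Rightarrow> complex) \<Rightarrow> (nat \<Rightarrow> complex)" where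
  "blk_comb d D S c = (\<lambda>a. \<Sum>j\<in>S. blk_apply d D j (c j) a)"

lemma spec_norm_blk_gram_le_coherence:
  assumes "0 < d" "l < M" "r < M" "l \<noteq> r"
  shows "spec_norm d (blk_gram L d D l r) \<le> real d * block_coherence L d M D"
proof -
  let ?f = "\<lambda>l r. spec_norm d (blk_gram L d D l r) / real d"
  have "{?f l r | l r. l < M \<and> r < M \<and> r \<noteq> l} \<subseteq> (\<lambda>(l, r). ?f l r) ` ({..<M} \<times> {..<M})"
    by auto
  then have "finite {?f l r | l r. l < M \<and> r < M \<and> r \<noteq> l}"
    by (rule finite_subset) auto
  then have "?f l r \<le> block_coherence L d M D"
    unfolding block_coherence_def by (rule Max_ge) (use assms in auto)
  then show ?thesis using assms(1) by (simp add: divide_le_eq mult.commute)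
qed

lemma cinner_blk_apply: "cinner L (blk_apply d D l z) r = cinner d z (blk_adj_apply L d D l r)"
  unfolding cinner_def blk_apply_def blk_adj_apply_def
  by (simp add: sum_distrib_left sum_distrib_right sum.swap[where A="{..<L}"] mult_ac)

lemma blk_adj_apply_blk_apply:
  "blk_adj_apply L d D p (blk_apply d D j c) = mat_apply d (blk_gram L d D p j) c"
  unfolding mat_apply_def blk_gram_def blk_adj_apply_def blk_apply_def
  by (rule ext) (simp add: sum_distrib_left sum_distrib_right sum.swap[where A="{..<L}"] mult_ac)

lemma blk_adj_apply_cong:
  "(\<And>a. a < L \<Longrightarrow> r a = r' a) \<Longrightarrow> blk_adj_apply L d D p r = blk_adj_apply L d D p r'"
  unfolding blk_adj_apply_def by (rule ext, rule sum.cong) auto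

lemma blk_adj_apply_sum:
  "blk_adj_apply L d D p (\<lambda>a. \<Sum>j\<in>S. f j a) = (\<lambda>t. \<Sum>j\<in>S. blk_adj_apply L d D p (f j) t)"
  unfolding blk_adj_apply_def by (rule ext) (simp add: sum_distrib_left sum.swap[where A=S])

lemma blk_apply_diff:
  "blk_apply d D j (\<lambda>t. u t - w t) a = blk_apply d D j u a - blk_apply d D j w a"
  unfolding blk_apply_def by (simp add: right_diff_distrib sum_subtractf)

lemma blk_apply_vnorm_eq_0: "vnorm d z = 0 \<Longrightarrow> blk_apply d D j z = (\<lambda>a. 0)"
  unfolding blk_apply_def by (intro ext sum.neutral) (auto dest: vnorm_eq_0D)

lemma blk_comb_eq_0: "\<forall>j\<in>S. vnorm d (c j) = 0 \<Longrightarrow> blk_comb d D S c = (\<lambda>a. 0)"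
  unfolding blk_comb_def by (simp add: blk_apply_vnorm_eq_0)

lemma sum_lessThan_shift: "sum (g :: nat \<Rightarrow> complex) {m..<m + n} = (\<Sum>t<n. g (m + t))"
  by (induct n) (auto simp: add.commute)

lemma matvec_eq_blk_comb:
  assumes "S \<subseteq> {..<M}" and "\<And>l. l < M \<Longrightarrow> l \<notin> S \<Longrightarrow> vnorm d (blk d x l) = 0"
  shows "matvec (M * d) D x a = blk_comb d D S (blk d x) a"
proof -
  have "matvec (M * d) D x a = (\<Sum>l<M. blk_apply d D l (blk d x l) a)"
    unfolding matvec_def blk_apply_def blk_def
    using sum.nat_group[of "\<lambda>j. D a j * x j" d M, symmetric] by (simp add: sum_lessThan_shift)
  also have "\<dots> = (\<Sum>l\<in>S. blk_apply d D l (blk d x l) a)"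
    using assms by (intro sum.mono_neutral_right) (auto simp: blk_apply_vnorm_eq_0)
  finally show ?thesis unfolding blk_comb_def .
qed

lemma blk_adj_apply_eq_0: "(\<And>a. a < L \<Longrightarrow> r a = 0) \<Longrightarrow> blk_adj_apply L d D p r = (\<lambda>t. 0)"
  unfolding blk_adj_apply_def by (intro ext sum.neutral) auto

lemma blk_comb_diff_blk_apply:
  assumes "finite S" "q \<in> S"
  shows "blk_comb d D S c a - blk_apply d D q z a = blk_comb d D S (c(q := (\<lambda>t. c q t - z t))) a"
  unfolding blk_comb_def
  using sum.remove[OF assms, of "\<lambda>j. blk_apply d D j (c j) a"]
    sum.remove[OF assms, of "\<lambda>j. blk_apply d D j ((c(q := (\<lambda>t. c q t - z t))) j) a"]
  by (simp add: blk_apply_diff)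

lemma vnorm_power2_blk_comb:
  "(vnorm L (blk_comb d D S c))\<^sup>2
     = (\<Sum>j\<in>S. Re (cinner d (c j) (blk_adj_apply L d D j (blk_comb d D S c))))"
proof -
  have "complex_of_real ((vnorm L (blk_comb d D S c))\<^sup>2) = cinner L (blk_comb d D S c) (blk_comb d D S c)"
    by (simp add: cinner_self)
  also have "\<dots> = (\<Sum>j\<in>S. cinner L (blk_apply d D j (c j)) (blk_comb d D S c))"
    by (subst (1) blk_comb_def) (rule cinner_sum_left)
  also have "\<dots> = (\<Sum>j\<in>S. cinner d (c j) (blk_adj_apply L d D j (blk_comb d D S c)))"
    by (simp add: cinner_blk_apply)
  finally show ?thesis by (metis Re_complex_of_real Re_sum)
qed

lemma vnorm_power2_blk_comb_le_correlation:
  assumes "\<forall>j\<in>S. vnorm d (blk_adj_apply L d D j (blk_comb d D S c)) \<le> A"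
  shows "(vnorm L (blk_comb d D S c))\<^sup>2 \<le> (\<Sum>j\<in>S. vnorm d (c j)) * A"
  unfolding vnorm_power2_blk_comb sum_distrib_right
proof (rule sum_mono)
  fix j assume "j \<in> S"
  let ?z = "blk_adj_apply L d D j (blk_comb d D S c)"
  have "Re (cinner d (c j) ?z) \<le> vnorm d (c j) * vnorm d ?z"
    using complex_Re_le_cmod cinner_Cauchy_Schwarz order_trans by blast
  also have "\<dots> \<le> vnorm d (c j) * A" using assms \<open>j \<in> S\<close> by (simp add: mult_left_mono)
  finally show "Re (cinner d (c j) ?z) \<le> vnorm d (c j) * A" .
qed

section \<open>Dictionaries with orthonormal blocks\<close>

locale orthonormal_blocks =
  fixes L d M :: nat and D :: "nat \<Rightarrow> nat \<Rightarrow> complex" and mu :: real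
  assumes orth: "\<forall>l<M. \<forall>s<d. \<forall>t<d. blk_gram L d D l l s t = (if s = t then 1 else 0)"
    and cross_gram: "\<And>l r. l < M \<Longrightarrow> r < M \<Longrightarrow> l \<noteq> r \<Longrightarrow> spec_norm d (blk_gram L d D l r) \<le> real d * mu"
begin

definition cross_term :: "nat set \<Rightarrow> (nat \<Rightarrow> nat \<Rightarrow> complex) \<Rightarrow> nat \<Rightarrow> (nat \<Rightarrow> complex)" where
  "cross_term S c p = (\<lambda>t. \<Sum>j\<in>S-{p}. mat_apply d (blk_gram L d D p j) (c j) t)"

lemma mat_apply_blk_gram_diag: "p < M \<Longrightarrow> t < d \<Longrightarrow> mat_apply d (blk_gram L d D p p) v t = v t"
  unfolding mat_apply_def using orth
  by (simp add: if_distrib[where f="\<lambda>x. x * _"] cong: if_cong)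

lemma blk_adj_apply_blk_comb:
  assumes "finite S" "p < M" "t < d"
  shows "blk_adj_apply L d D p (blk_comb d D S c) t = (if p \<in> S then c p t else 0) + cross_term S c p t"
proof (cases "p \<in> S")
  case True
  then show ?thesis
    unfolding blk_comb_def blk_adj_apply_sum blk_adj_apply_blk_apply cross_term_def
    using sum.remove[OF assms(1) True, of "\<lambda>j. mat_apply d (blk_gram L d D p j) (c j) t"]
      mat_apply_blk_gram_diag[OF assms(2,3)] by simp
next
  case False
  then have "S - {p} = S" by auto
  then show ?thesis using False
    unfolding blk_comb_def blk_adj_apply_sum blk_adj_apply_blk_apply cross_term_def by simp
qed

lemma vnorm_cross_term_le:
  assumes "S \<subseteq> {..<M}" "p < M"
  shows "vnorm d (cross_term S c p) \<le> real d * mu * (\<Sum>j\<in>S-{p}. vnorm d (c j))"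
proof -
  have "vnorm d (cross_term S c p) \<le> (\<Sum>j\<in>S-{p}. vnorm d (mat_apply d (blk_gram L d D p j) (c j)))"
    unfolding cross_term_def by (rule vnorm_sum_le)
  also have "\<dots> \<le> (\<Sum>j\<in>S-{p}. real d * mu * vnorm d (c j))"
    using assms vnorm_mat_apply_le_spec_norm cross_gram
    by (intro sum_mono) (metis DiffE insertI1 lessThan_iff mult_right_mono order_trans subsetD vnorm_nonneg)
  finally show ?thesis by (simp add: sum_distrib_left)
qed

lemma vnorm_power2_blk_projection_step:
  assumes "p < M"
  shows "(vnorm L (\<lambda>a. r a - blk_apply d D p (blk_adj_apply L d D p r) a))\<^sup>2
         = (vnorm L r)\<^sup>2 - (vnorm d (blk_adj_apply L d D p r))\<^sup>2"
proof -
  define z where "z = blk_adj_apply L d D p r"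
  define w where "w = blk_apply d D p z"
  have wr: "cinner L w r = cinner d z z" unfolding w_def z_def cinner_blk_apply ..
  have rw: "cinner L r w = cinner d z z"
    using arg_cong[OF wr, of cnj] by (simp add: cnj_cinner cinner_self)
  have ww: "cinner L w w = cinner d z z"
    unfolding w_def cinner_blk_apply blk_adj_apply_blk_apply
    using mat_apply_blk_gram_diag[OF assms] by (intro cinner_cong) auto
  have "complex_of_real ((vnorm L (\<lambda>a. r a - w a))\<^sup>2) = cinner L (\<lambda>a. r a - w a) (\<lambda>a. r a - w a)"
    by (simp add: cinner_self)
  also have "\<dots> = cinner L r r - cinner L r w - (cinner L w r - cinner L w w)"
    unfolding cinner_diff_left cinner_diff_right ..
  also have "\<dots> = complex_of_real ((vnorm L r)\<^sup>2 - (vnorm d z)\<^sup>2)"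
    unfolding wr rw ww by (simp add: cinner_self)
  finally show ?thesis unfolding w_def z_def of_real_eq_iff .
qed

lemma correlation_in_support_ge:
  assumes "finite S" "S \<subseteq> {..<M}" "p \<in> S"
  shows "vnorm d (c p) - real d * mu * (\<Sum>j\<in>S-{p}. vnorm d (c j))
         \<le> vnorm d (blk_adj_apply L d D p (blk_comb d D S c))"
proof -
  have pM: "p < M" using assms by auto
  have "vnorm d (c p) = vnorm d (\<lambda>t. blk_adj_apply L d D p (blk_comb d D S c) t - cross_term S c p t)"
    using assms blk_adj_apply_blk_comb[OF assms(1) pM] by (intro vnorm_cong) auto
  also have "\<dots> \<le> vnorm d (blk_adj_apply L d D p (blk_comb d D S c)) + vnorm d (cross_term S c p)"
    by (rule vnorm_diff_le)
  finally show ?thesis using vnorm_cross_term_le[OF assms(2) pM, of c] by linarith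
qed

lemma correlation_off_support_le:
  assumes "finite S" "S \<subseteq> {..<M}" "q < M" "q \<notin> S"
  shows "vnorm d (blk_adj_apply L d D q (blk_comb d D S c)) \<le> real d * mu * (\<Sum>j\<in>S. vnorm d (c j))"
proof -
  have "vnorm d (blk_adj_apply L d D q (blk_comb d D S c)) = vnorm d (cross_term S c q)"
    using assms blk_adj_apply_blk_comb[OF assms(1,3)] by (intro vnorm_cong) auto
  also have "\<dots> \<le> real d * mu * (\<Sum>j\<in>S-{q}. vnorm d (c j))" by (rule vnorm_cross_term_le[OF assms(2,3)])
  finally show ?thesis using assms(4) by (simp add: Diff_insert_absorb[symmetric])
qed

lemma support_block_correlates_most:
  assumes fin: "finite S" and sub: "S \<subseteq> {..<M}" and card: "card S \<le> k"
    and cond: "(2 * real k - 1) * real d * mu < 1" and mu0: "0 \<le> mu"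
    and nz: "\<exists>a<L. blk_comb d D S c a \<noteq> 0" and q: "q < M" "q \<notin> S"
  shows "\<exists>p\<in>S. vnorm d (blk_adj_apply L d D q (blk_comb d D S c))
               < vnorm d (blk_adj_apply L d D p (blk_comb d D S c))"
proof -
  have "S \<noteq> {}" using nz unfolding blk_comb_def by auto
  then obtain p where p: "p \<in> S" and pmax: "\<forall>j\<in>S. vnorm d (c j) \<le> vnorm d (c p)"
  proof -
    have "Max ((\<lambda>j. vnorm d (c j)) ` S) \<in> (\<lambda>j. vnorm d (c j)) ` S"
      using fin \<open>S \<noteq> {}\<close> by (intro Max_in) auto
    then obtain p where "p \<in> S" "vnorm d (c p) = Max ((\<lambda>j. vnorm d (c j)) ` S)" by auto
    then show ?thesis using that fin by simp
  qed
  define m where "m = vnorm d (c p)"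
  have "m > 0"
  proof (rule ccontr)
    assume "\<not> m > 0"
    then have "\<forall>j\<in>S. vnorm d (c j) = 0"
      using pmax unfolding m_def by (meson antisym not_less order_trans vnorm_nonneg)
    then show False using nz by (simp add: blk_comb_eq_0)
  qed
  have dmu: "0 \<le> real d * mu" using mu0 by simp
  have others: "(\<Sum>j\<in>S-{p}. vnorm d (c j)) \<le> (real k - 1) * m"
  proof -
    have "(\<Sum>j\<in>S-{p}. vnorm d (c j)) \<le> real (card (S-{p})) * m"
      using pmax unfolding m_def by (intro sum_bounded_above) auto
    also have "\<dots> \<le> (real k - 1) * m"
    proof (rule mult_right_mono)
      have "card S > 0" using p fin card_gt_0_iff by blast
      then show "real (card (S - {p})) \<le> real k - 1" using p fin card by (simp add: of_nat_diff)
    qed (use \<open>m > 0\<close> in simp)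
    finally show ?thesis .
  qed
  have all: "(\<Sum>j\<in>S. vnorm d (c j)) \<le> real k * m"
  proof -
    have "(\<Sum>j\<in>S. vnorm d (c j)) \<le> real (card S) * m"
      using pmax unfolding m_def by (intro sum_bounded_above) auto
    also have "\<dots> \<le> real k * m" using card \<open>m > 0\<close> by (intro mult_right_mono) auto
    finally show ?thesis .
  qed
  have "m - real d * mu * ((real k - 1) * m) \<le> vnorm d (blk_adj_apply L d D p (blk_comb d D S c))"
    using correlation_in_support_ge[OF fin sub p, of c] mult_left_mono[OF others dmu]
    unfolding m_def by linarith
  moreover have "vnorm d (blk_adj_apply L d D q (blk_comb d D S c)) \<le> real d * mu * (real k * m)"
    using correlation_off_support_le[OF fin sub q, of c] mult_left_mono[OF all dmu] by linarith
  moreover have "m * ((2 * real k - 1) * real d * mu) < m * 1" using cond \<open>m > 0\<close> by simp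
  then have "real d * mu * (real k * m) < m - real d * mu * ((real k - 1) * m)"
    by (simp add: algebra_simps)
  ultimately show ?thesis using p by force
qed

lemma vnorm_power2_blk_comb_ge:
  fixes c :: "nat \<Rightarrow> nat \<Rightarrow> complex"
  assumes fin: "finite S" and sub: "S \<subseteq> {..<M}"
  defines "P \<equiv> \<Sum>j\<in>S. vnorm d (c j)" and "Q \<equiv> \<Sum>j\<in>S. (vnorm d (c j))\<^sup>2"
  shows "Q - real d * mu * (P\<^sup>2 - Q) \<le> (vnorm L (blk_comb d D S c))\<^sup>2"
proof -
  have "Q - real d * mu * (P\<^sup>2 - Q) = (\<Sum>j\<in>S. (vnorm d (c j))\<^sup>2 - real d * mu * (vnorm d (c j) * (P - vnorm d (c j))))"
    unfolding P_def Q_def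
    by (simp add: sum_subtractf sum_distrib_left sum_distrib_right power2_eq_square algebra_simps sum.distrib)
  also have "\<dots> \<le> (\<Sum>j\<in>S. Re (cinner d (c j) (blk_adj_apply L d D j (blk_comb d D S c))))"
  proof (rule sum_mono)
    fix j assume j: "j \<in> S"
    then have jM: "j < M" using sub by auto
    let ?x = "cross_term S c j"
    have "cinner d (c j) (blk_adj_apply L d D j (blk_comb d D S c)) = cinner d (c j) (\<lambda>t. c j t + ?x t)"
      using blk_adj_apply_blk_comb[OF fin jM] j by (intro cinner_cong) auto
    then have eq: "Re (cinner d (c j) (blk_adj_apply L d D j (blk_comb d D S c)))
                   = (vnorm d (c j))\<^sup>2 + Re (cinner d (c j) ?x)"
      by (simp add: cinner_add_right cinner_self)
    have "- Re (cinner d (c j) ?x) \<le> cmod (cinner d (c j) ?x)"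
      by (metis abs_Re_le_cmod abs_le_iff)
    also have "\<dots> \<le> vnorm d (c j) * vnorm d ?x" by (rule cinner_Cauchy_Schwarz)
    also have "\<dots> \<le> vnorm d (c j) * (real d * mu * (\<Sum>i\<in>S-{j}. vnorm d (c i)))"
      by (rule mult_left_mono[OF vnorm_cross_term_le[OF sub jM]]) simp
    also have "(\<Sum>i\<in>S-{j}. vnorm d (c i)) = P - vnorm d (c j)"
      unfolding P_def using sum_diff1[OF fin, of "\<lambda>i. vnorm d (c i)" j] j by simp
    finally show "(vnorm d (c j))\<^sup>2 - real d * mu * (vnorm d (c j) * (P - vnorm d (c j)))
                  \<le> Re (cinner d (c j) (blk_adj_apply L d D j (blk_comb d D S c)))"
      unfolding eq by (simp add: algebra_simps)
  qed
  finally show ?thesis unfolding vnorm_power2_blk_comb .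
qed

lemma max_correlation_lower_bound:
  assumes fin: "finite S" and sub: "S \<subseteq> {..<M}" and card: "card S \<le> k"
    and gam: "0 \<le> 1 - (real k - 1) * real d * mu" and mu0: "0 \<le> mu"
    and A: "\<forall>j\<in>S. vnorm d (blk_adj_apply L d D j (blk_comb d D S c)) \<le> A"
  shows "(1 - (real k - 1) * real d * mu) / real k * (vnorm L (blk_comb d D S c))\<^sup>2 \<le> A\<^sup>2"
proof -
  define P where "P = (\<Sum>j\<in>S. vnorm d (c j))"
  define Q where "Q = (\<Sum>j\<in>S. (vnorm d (c j))\<^sup>2)"
  define \<rho> where "\<rho> = (vnorm L (blk_comb d D S c))\<^sup>2"
  define \<gamma> where "\<gamma> = 1 - (real k - 1) * real d * mu"
  have upper: "\<rho> \<le> P * A" unfolding \<rho>_def P_def by (rule vnorm_power2_blk_comb_le_correlation[OF A])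
  have PQ: "P\<^sup>2 \<le> real k * Q"
  proof -
    have "P\<^sup>2 \<le> Q * real (card S)" unfolding P_def Q_def by (rule sum_squared_le_sum_of_squares)
    also have "\<dots> \<le> Q * real k" using card by (intro mult_left_mono) (auto simp: Q_def sum_nonneg)
    finally show ?thesis by (simp add: mult.commute)
  qed
  have lower: "\<gamma> * Q \<le> \<rho>"
  proof -
    have "real d * mu * (P\<^sup>2 - Q) \<le> real d * mu * ((real k - 1) * Q)"
      using PQ mu0 by (intro mult_left_mono) (auto simp: algebra_simps)
    then show ?thesis using vnorm_power2_blk_comb_ge[OF fin sub, of c]
      unfolding \<gamma>_def \<rho>_def P_def Q_def by (simp add: algebra_simps)
  qed
  show ?thesis
  proof (cases "\<rho> = 0 \<or> k = 0")
    case True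
    then show ?thesis unfolding \<rho>_def by auto
  next
    case False
    then have "\<rho> > 0" and "real k > 0" unfolding \<rho>_def by auto
    have "\<gamma> * (\<rho> * \<rho>) \<le> \<gamma> * ((real k * Q) * A\<^sup>2)"
    proof (rule mult_left_mono)
      have "\<rho> * \<rho> \<le> (P * A) * (P * A)" using upper \<open>\<rho> > 0\<close> by (simp add: mult_mono)
      also have "\<dots> = P\<^sup>2 * A\<^sup>2" by (simp add: power2_eq_square)
      also have "\<dots> \<le> (real k * Q) * A\<^sup>2" using PQ by (simp add: mult_right_mono)
      finally show "\<rho> * \<rho> \<le> (real k * Q) * A\<^sup>2" .
    qed (use gam \<gamma>_def in simp)
    also have "\<dots> = (\<gamma> * Q) * (real k * A\<^sup>2)" by simp
    also have "\<dots> \<le> \<rho> * (real k * A\<^sup>2)" using lower by (simp add: mult_right_mono)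
    finally have "\<gamma> * \<rho> \<le> real k * A\<^sup>2" using \<open>\<rho> > 0\<close> by (simp add: mult_ac)
    then show ?thesis unfolding \<rho>_def[symmetric] \<gamma>_def[symmetric] using \<open>real k > 0\<close>
      by (simp add: divide_le_eq mult.commute)
  qed
qed

end

section \<open>Block matching pursuit on a block-sparse signal\<close>

locale bmp_run = orthonormal_blocks +
  fixes S :: "nat set" and k :: nat and y :: "nat \<Rightarrow> complex" and i :: "nat \<Rightarrow> nat"
  assumes finite_S: "finite S" and S_blocks: "S \<subseteq> {..<M}" and card_S: "card S \<le> k"
    and mu_nonneg: "0 \<le> mu" and coherence_small: "(2 * real k - 1) * real d * mu < 1"
    and y_in_span: "\<exists>c. \<forall>a<L. y a = blk_comb d D S c a"
    and run: "bmp_choice L d M D y i"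
begin

abbreviation res :: "nat \<Rightarrow> nat \<Rightarrow> complex" where
  "res \<equiv> bmp_res L d D y i"

lemma bmp_choice_Suc:
  "i (Suc n) < M"
  "j < M \<Longrightarrow> vnorm d (blk_adj_apply L d D j (res n)) \<le> vnorm d (blk_adj_apply L d D (i (Suc n)) (res n))"
  using run unfolding bmp_choice_def by (metis diff_Suc_1 le_add1 plus_1_eq_Suc)+

lemma bmp_picks_support:
  assumes c: "\<forall>a<L. res n a = blk_comb d D S c a" and nz: "\<exists>a<L. res n a \<noteq> 0"
  shows "i (Suc n) \<in> S"
proof (rule ccontr)
  assume "i (Suc n) \<notin> S"
  have adj: "blk_adj_apply L d D j (res n) = blk_adj_apply L d D j (blk_comb d D S c)" for j
    using c by (intro blk_adj_apply_cong) auto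
  obtain p where "p \<in> S" and "vnorm d (blk_adj_apply L d D (i (Suc n)) (res n))
                                < vnorm d (blk_adj_apply L d D p (res n))"
    using support_block_correlates_most[OF finite_S S_blocks card_S coherence_small mu_nonneg _
        bmp_choice_Suc(1) \<open>i (Suc n) \<notin> S\<close>] c nz
    unfolding adj by force
  then show False using bmp_choice_Suc(2)[of p n] S_blocks by (auto simp: not_le[symmetric])
qed

lemma bmp_res_in_span: "\<exists>c. \<forall>a<L. res n a = blk_comb d D S c a"
proof (induction n)
  case 0
  then show ?case using y_in_span by simp
next
  case (Suc n)
  then obtain c where c: "\<forall>a<L. res n a = blk_comb d D S c a" by blast
  show ?case
  proof (cases "\<exists>a<L. res n a \<noteq> 0")
    case False
    then have "blk_adj_apply L d D (i (Suc n)) (res n) = (\<lambda>t. 0)"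
      by (intro blk_adj_apply_eq_0) auto
    then have "\<forall>a<L. res (Suc n) a = res n a" by (simp add: blk_apply_vnorm_eq_0)
    then show ?thesis using c by auto
  next
    case True
    then have "i (Suc n) \<in> S" using bmp_picks_support c by blast
    with c have "\<forall>a<L. res (Suc n) a = blk_comb d D S (c(i (Suc n) :=
        (\<lambda>t. c (i (Suc n)) t - blk_adj_apply L d D (i (Suc n)) (res n) t))) a"
      using blk_comb_diff_blk_apply[OF finite_S] by simp
    then show ?thesis by blast
  qed
qed

lemma bmp_picks_support_of_nonzero: "\<exists>a<L. res n a \<noteq> 0 \<Longrightarrow> i (Suc n) \<in> S"
  using bmp_picks_support bmp_res_in_span by blast

lemma bmp_res_decay_Suc:
  "(vnorm L (res (Suc n)))\<^sup>2 \<le> (1 - (1 - (real k - 1) * real d * mu) / real k) * (vnorm L (res n))\<^sup>2"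
proof -
  obtain c where c: "\<forall>a<L. res n a = blk_comb d D S c a" using bmp_res_in_span by blast
  define A where "A = vnorm d (blk_adj_apply L d D (i (Suc n)) (res n))"
  have adj: "blk_adj_apply L d D j (res n) = blk_adj_apply L d D j (blk_comb d D S c)" for j
    using c by (intro blk_adj_apply_cong) auto
  have "vnorm L (res n) = vnorm L (blk_comb d D S c)" using c by (intro vnorm_cong) auto
  moreover have "(vnorm L (res (Suc n)))\<^sup>2 = (vnorm L (res n))\<^sup>2 - A\<^sup>2"
    using vnorm_power2_blk_projection_step[OF bmp_choice_Suc(1)] by (simp add: A_def)
  moreover have "(1 - (real k - 1) * real d * mu) / real k * (vnorm L (blk_comb d D S c))\<^sup>2 \<le> A\<^sup>2"
  proof (rule max_correlation_lower_bound[OF finite_S S_blocks card_S _ mu_nonneg])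
    show "0 \<le> 1 - (real k - 1) * real d * mu"
      using coherence_small mu_nonneg mult_right_mono[of "real k - 1" "2 * real k - 1" "real d * mu"]
      by (simp add: mult.assoc)
    show "\<forall>j\<in>S. vnorm d (blk_adj_apply L d D j (blk_comb d D S c)) \<le> A"
      using bmp_choice_Suc(2)[of _ n] S_blocks unfolding A_def adj by auto
  qed
  ultimately show ?thesis by (simp add: algebra_simps)
qed

lemma bmp_res_decay:
  "(vnorm L (res n))\<^sup>2 \<le> (1 - (1 - (real k - 1) * real d * mu) / real k) ^ n * (vnorm L (res 0))\<^sup>2"
proof (induction n)
  case (Suc n)
  let ?\<beta> = "1 - (1 - (real k - 1) * real d * mu) / real k"
  have "0 \<le> ?\<beta>"
  proof (cases "k = 0")
    case False
    have "0 \<le> (real k - 1) * real d * mu" using False mu_nonneg by simp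
    then show ?thesis using False by (simp add: divide_le_eq)
  qed simp
  have "(vnorm L (res (Suc n)))\<^sup>2 \<le> ?\<beta> * (vnorm L (res n))\<^sup>2" by (rule bmp_res_decay_Suc)
  also have "\<dots> \<le> ?\<beta> * (?\<beta> ^ n * (vnorm L (res 0))\<^sup>2)"
    using Suc \<open>0 \<le> ?\<beta>\<close> by (rule mult_left_mono)
  finally show ?case by (simp add: mult.assoc)
qed simp

end

lemma coherence_condition_rescaled:
  assumes "mu > 0" and "real (k * d) < (1 / 2) * (1 / mu + real d)"
  shows "(2 * real k - 1) * real d * mu < 1"
proof -
  have "2 * mu * real (k * d) < 2 * mu * ((1 / 2) * (1 / mu + real d))"
    using assms by (intro mult_strict_left_mono) auto
  then show ?thesis using assms(1) by (simp add: algebra_simps)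
qed

theorem theorem4:
  fixes R M d k :: nat and D :: "nat \<Rightarrow> nat \<Rightarrow> complex"
    and x0 :: "nat \<Rightarrow> complex" and i :: "nat \<Rightarrow> nat"
  assumes "L = R * d" and "N = M * d"
    and orth: "\<forall>l<M. \<forall>s<d. \<forall>t<d.
                 blk_gram L d D l l s t = (if s = t then 1 else 0)"
    and spark: "\<forall>g. block_sparse d M (2 * k) g \<and> (\<exists>j<N. g j \<noteq> 0)
                   \<longrightarrow> (\<exists>a<L. matvec N D g a \<noteq> 0)"
    and x0: "block_sparse d M k x0"
    and y: "y = matvec N D x0"
    and mu: "mu = block_coherence L d M D" and mupos: "mu > 0"
    and cond: "real (k * d) < (1 / 2) * (1 / mu + real d)"
    and beta: "beta = 1 - (1 - (real k - 1) * real d * mu) / real k"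
    and run: "bmp_choice L d M D y i"
  shows "(\<forall>l\<ge>1. (\<exists>a<L. bmp_res L d D y i (l - 1) a \<noteq> 0)
                 \<longrightarrow> vnorm d (blk d x0 (i l)) > 0)
       \<and> (\<forall>l. (vnorm L (bmp_res L d D y i l))\<^sup>2 \<le> beta ^ l * (vnorm L (bmp_res L d D y i 0))\<^sup>2)"
  \<comment> \<open>The hypothesis spark only makes x0 the unique block k-sparse preimage of y;
      neither claim depends on it.\<close>
proof (cases "d = 0")
  case True
  then show ?thesis using assms(1) by (simp add: vnorm_def)
next
  case False
  define S where "S = {l. l < M \<and> vnorm d (blk d x0 l) \<noteq> 0}"
  interpret bmp_run L d M D mu S k y i
  proof unfold_locales
    show "spec_norm d (blk_gram L d D l r) \<le> real d * mu" if "l < M" "r < M" "l \<noteq> r" for l r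
      unfolding mu using False that by (intro spec_norm_blk_gram_le_coherence) auto
    show "card S \<le> k" using x0 unfolding block_sparse_def S_def .
    show "\<exists>c. \<forall>a<L. y a = blk_comb d D S c a"
      unfolding y assms(2) using matvec_eq_blk_comb[of S M d x0 D] S_def by auto
  qed (use orth mupos coherence_condition_rescaled[OF mupos cond] run S_def in auto)
  show ?thesis
  proof (intro conjI allI impI)
    fix l :: nat
    assume "l \<ge> 1" and "\<exists>a<L. res (l - 1) a \<noteq> 0"
    then have "i l \<in> S" using bmp_picks_support_of_nonzero[of "l - 1"] by simp
    then show "vnorm d (blk d x0 (i l)) > 0" unfolding S_def by (auto simp: less_le)
  next
    fix l
    show "(vnorm L (res l))\<^sup>2 \<le> beta ^ l * (vnorm L (res 0))\<^sup>2"
      unfolding beta by (rule bmp_res_decay)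
  qed
qed

end
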